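(* Let $d\ge1$, $n\in\mathbb{N}$, and let $R(n)$ be the range of $n$ steps of simple symmetric random walk on $\mathbb{Z}^d$ started at $0$. Then $$H(R(n))\ge -\log\Big(1-\frac{1}{2d}\Big)\cdot \mathbb{E}\big[|\partial R(n)|-1\big].$$
   Context: $H(X)=\mathbb{E}[-\log p(X)]$ with $p(x)=\Pr[X=x]$, logarithms base $2$. The inner boundary of $A\subset\mathbb{Z}^d$ is $\partial A=\{z\in A : z \text{ is at graph distance } 1 \text{ from some vertex of } \mathbb{Z}^d\setminus A\}$. The range is $R(n)=\{S(0),\ldots,S(n)\}$. *)

theory Defs
  imports "HOL-Probability.Probability" "HOL-Library.Function_Algebras"
begin

text \<open>Points of Z^d are represented as functions nat => int vanishing outside {..<d}.\<close>

definition lattice :: "nat \<Rightarrow> (nat \<Rightarrow> int) set" where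
  "lattice d = {x. \<forall>i\<ge>d. x i = 0}"

definition adjacent :: "nat \<Rightarrow> (nat \<Rightarrow> int) \<Rightarrow> (nat \<Rightarrow> int) \<Rightarrow> bool" where
  "adjacent d x y \<longleftrightarrow> x \<in> lattice d \<and> y \<in> lattice d \<and> (\<Sum>i<d. \<bar>x i - y i\<bar>) = 1"

definition inner_boundary :: "nat \<Rightarrow> (nat \<Rightarrow> int) set \<Rightarrow> (nat \<Rightarrow> int) set" where
  "inner_boundary d A = {z \<in> A. \<exists>y \<in> lattice d - A. adjacent d z y}"

definition unit_vec :: "nat \<Rightarrow> nat \<Rightarrow> int" where
  "unit_vec i = (\<lambda>j. if j = i then 1 else 0)"

definition steps :: "nat \<Rightarrow> (nat \<Rightarrow> int) set" where
  "steps d = {unit_vec i | i. i < d} \<union> {- unit_vec i | i. i < d}"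

text \<open>All step sequences of length n; the simple symmetric random walk of n steps
  is the uniform distribution on them (i.i.d. uniform steps).\<close>
definition walk_paths :: "nat \<Rightarrow> nat \<Rightarrow> (nat \<Rightarrow> int) list set" where
  "walk_paths d n = {xs. length xs = n \<and> set xs \<subseteq> steps d}"

definition walk :: "nat \<Rightarrow> nat \<Rightarrow> (nat \<Rightarrow> int) list pmf" where
  "walk d n = pmf_of_set (walk_paths d n)"

definition pos :: "(nat \<Rightarrow> int) list \<Rightarrow> nat \<Rightarrow> nat \<Rightarrow> int" where
  "pos xs k = sum_list (take k xs)"

definition walk_range :: "(nat \<Rightarrow> int) list \<Rightarrow> (nat \<Rightarrow> int) set" where
  "walk_range xs = pos xs ` {0..length xs}"

definition entropy2 :: "'a pmf \<Rightarrow> real" where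
  "entropy2 p = (\<Sum>x\<in>set_pmf p. - pmf p x * log 2 (pmf p x))"

end

theory Submission imports Defs begin

(* Fix a finite set A of lattice points and let m = |steps d| <= 2d.
   Consider the walk restricted to A: from x it moves uniformly to one of the
   inner_degree A x neighbours of x that lie in A.  A step sequence xs staying in A
   has probability 1 / choices A 0 xs under this walk, where choices is the product
   of the inner degrees along the path, so these reciprocals sum to at most 1.
   Every inner boundary point of A has a neighbour outside A, hence inner degree at
   most m - 1; a path whose range is A departs from all but at most one (the last)
   boundary point, so choices A 0 xs <= m^n (1 - 1/m)^(|dA| - 1).  Consequently at
   most m^n (1 - 1/m)^(|dA| - 1) of the m^n equally likely paths have range A, i.e.
   P(R(n) = A) <= (1 - 1/(2d))^(|dA| - 1).  A general entropy estimate
   (a pointwise bound p(x) <= r^g(x) gives H(p) >= -log r * E g) finishes the proof. *)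

type_synonym point = "nat \<Rightarrow> int"

text \<open>Points are added as vectors; evaluating sums pointwise only obscures the paths.\<close>
declare plus_fun_apply [simp del]

fun path_range :: "point \<Rightarrow> point list \<Rightarrow> point set" where
  "path_range x [] = {x}"
| "path_range x (s # ys) = insert x (path_range (x + s) ys)"

lemma start_in_path_range: "x \<in> path_range x xs"
  by (cases xs) auto

lemma finite_path_range: "finite (path_range x xs)"
  by (induction xs arbitrary: x) auto

lemma path_range_eq_positions:
  "(\<lambda>k. x + sum_list (take k xs)) ` {0..length xs} = path_range x xs"
proof (induction xs arbitrary: x)
  case Nil
  show ?case by (simp add: func_zero)
next
  case (Cons s ys)
  have indices: "{0..length (s # ys)} = insert 0 (Suc ` {0..length ys})"
    by (auto simp: image_iff)
  have "(\<lambda>k. x + sum_list (take k (s # ys))) ` Suc ` {0..length ys}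
      = (\<lambda>k. (x + s) + sum_list (take k ys)) ` {0..length ys}"
    unfolding image_image by (simp add: add.assoc)
  then show ?case
    unfolding indices image_insert using Cons[of "x + s"] by simp
qed

lemma walk_range_eq_path_range: "walk_range xs = path_range 0 xs"
  using path_range_eq_positions[of 0 xs] by (simp add: walk_range_def pos_def)

lemma steps_eq: "steps d = unit_vec ` {..<d} \<union> (\<lambda>i. - unit_vec i) ` {..<d}"
  unfolding steps_def by auto

lemma finite_steps: "finite (steps d)"
  by (simp add: steps_eq)

lemma card_steps_le: "card (steps d) \<le> 2 * d"
proof -
  have "card (steps d) \<le> card (unit_vec ` {..<d}) + card ((\<lambda>i. - unit_vec i) ` {..<d})"
    unfolding steps_eq by (rule card_Un_le)
  also have "\<dots> \<le> d + d"
    by (intro add_mono) (metis card_image_le card_lessThan finite_lessThan)+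
  finally show ?thesis by simp
qed

lemma steps_nonempty: "d \<ge> 1 \<Longrightarrow> steps d \<noteq> {}"
  unfolding steps_def by fastforce

lemma l1_norm_one:
  fixes z :: point
  assumes "(\<Sum>i<d. \<bar>z i\<bar>) = 1"
  obtains i where "i < d" "\<bar>z i\<bar> = 1" "\<And>j. j < d \<Longrightarrow> j \<noteq> i \<Longrightarrow> z j = 0"
proof -
  obtain i where i: "i < d" "z i \<noteq> 0"
  proof (rule ccontr)
    assume "\<not> thesis"
    then have "\<forall>i<d. z i = 0"
      using that by blast
    then show False
      using assms by simp
  qed
  have split: "(\<Sum>j<d. \<bar>z j\<bar>) = \<bar>z i\<bar> + (\<Sum>j\<in>{..<d} - {i}. \<bar>z j\<bar>)"
    using i by (simp add: sum.remove)
  have "(\<Sum>j\<in>{..<d} - {i}. \<bar>z j\<bar>) \<ge> 0" and "\<bar>z i\<bar> \<ge> 1"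
    using i by (auto simp: sum_nonneg)
  then have "\<bar>z i\<bar> = 1" and rest: "(\<Sum>j\<in>{..<d} - {i}. \<bar>z j\<bar>) = 0"
    using split assms by linarith+
  moreover have "z j = 0" if "j < d" "j \<noteq> i" for j
    using rest that sum_nonneg_eq_0_iff[of "{..<d} - {i}" "\<lambda>j. \<bar>z j\<bar>"] by auto
  ultimately show ?thesis using that i by blast
qed

lemma adjacent_diff_in_steps:
  assumes "adjacent d x y"
  shows "y - x \<in> steps d"
proof -
  define z where "z = y - x"
  have "(\<Sum>i<d. \<bar>z i\<bar>) = 1"
    using assms by (simp add: z_def adjacent_def abs_minus_commute)
  then obtain i where i: "i < d" "\<bar>z i\<bar> = 1"
    and others: "\<And>j. j < d \<Longrightarrow> j \<noteq> i \<Longrightarrow> z j = 0"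
    by (erule l1_norm_one)
  have outside: "z j = 0" if "j \<ge> d" for j
    using assms that by (simp add: z_def adjacent_def lattice_def)
  have "z = unit_vec i \<or> z = - unit_vec i"
  proof (cases "z i = 1")
    case True
    then have "z j = unit_vec i j" for j
      using others[of j] outside[of j] by (cases "j < d") (auto simp: unit_vec_def)
    then show ?thesis
      by (simp add: fun_eq_iff)
  next
    case False
    then have "z i = -1"
      using i(2) by linarith
    then have "z j = (- unit_vec i) j" for j
      using others[of j] outside[of j] by (cases "j < d") (auto simp: unit_vec_def)
    then show ?thesis
      by (simp add: fun_eq_iff)
  qed
  then show ?thesis
    using i(1) unfolding z_def steps_def by auto
qed

definition inner_degree :: "nat \<Rightarrow> point set \<Rightarrow> point \<Rightarrow> nat" where
  "inner_degree d A x = card {s \<in> steps d. x + s \<in> A}"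

lemma inner_degree_le: "inner_degree d A x \<le> card (steps d)"
  unfolding inner_degree_def by (rule card_mono[OF finite_steps]) auto

lemma inner_degree_pos:
  assumes "s \<in> steps d" "x + s \<in> A"
  shows "inner_degree d A x > 0"
proof -
  have "s \<in> {s \<in> steps d. x + s \<in> A}"
    using assms by simp
  then show ?thesis
    unfolding inner_degree_def using finite_steps by (auto simp: card_gt_0_iff)
qed

text \<open>A boundary point loses at least the step leading out of A.\<close>
lemma inner_degree_boundary:
  assumes "x \<in> inner_boundary d A"
  shows "inner_degree d A x + 1 \<le> card (steps d)"
proof -
  obtain y where y: "y \<in> lattice d - A" "adjacent d x y"
    using assms by (auto simp: inner_boundary_def)
  have out: "y - x \<in> steps d" by (rule adjacent_diff_in_steps[OF y(2)])
  have "{s \<in> steps d. x + s \<in> A} \<subseteq> steps d - {y - x}"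
    using y(1) by auto
  then have "inner_degree d A x \<le> card (steps d - {y - x})"
    unfolding inner_degree_def by (intro card_mono) (simp_all add: finite_steps)
  also have "\<dots> = card (steps d) - 1"
    using out finite_steps by simp
  finally have "inner_degree d A x \<le> card (steps d) - 1" .
  moreover have "card (steps d) > 0"
    using out finite_steps by (auto simp: card_gt_0_iff)
  ultimately show ?thesis
    by linarith
qed

section \<open>The walk restricted to a set\<close>

text \<open>The saving factor 1 - 1/m per boundary point is a probability for every m.\<close>
lemma one_minus_inverse_nat_bounds: "0 \<le> 1 - 1 / real (c :: nat) \<and> 1 - 1 / real c \<le> 1"
  by (cases c) (auto simp: divide_le_eq_1)

text \<open>Product of the inner degrees along a path: the inverse of its probability
  under the walk that moves uniformly to a neighbour inside A.\<close>
fun choices :: "nat \<Rightarrow> point set \<Rightarrow> point \<Rightarrow> point list \<Rightarrow> real" where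
  "choices d A x [] = 1"
| "choices d A x (s # ys) = real (inner_degree d A x) * choices d A (x + s) ys"

lemma choices_nonneg: "choices d A x xs \<ge> 0"
  by (induction xs arbitrary: x) auto

lemma choices_pos:
  "set xs \<subseteq> steps d \<Longrightarrow> path_range x xs \<subseteq> A \<Longrightarrow> choices d A x xs > 0"
proof (induction xs arbitrary: x)
  case (Cons s ys)
  have "x + s \<in> A"
    using Cons.prems(2) start_in_path_range[of "x + s" ys] by auto
  then show ?case
    using Cons inner_degree_pos[of s d x A] by auto
qed simp

lemma walk_paths_0: "walk_paths d 0 = {[]}"
  by (auto simp: walk_paths_def)

lemma walk_paths_Suc:
  "walk_paths d (Suc n) = (\<lambda>(s, ys). s # ys) ` (steps d \<times> walk_paths d n)"
  unfolding walk_paths_def by (auto simp: image_iff length_Suc_conv)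

lemma finite_walk_paths: "finite (walk_paths d n)"
  using finite_lists_length_eq[OF finite_steps]
  by (simp add: walk_paths_def conj_commute)

lemma card_walk_paths: "card (walk_paths d n) = card (steps d) ^ n"
  using card_lists_length_eq[OF finite_steps]
  by (simp add: walk_paths_def conj_commute)

lemma walk_paths_nonempty:
  assumes "d \<ge> 1"
  shows "walk_paths d n \<noteq> {}"
proof -
  have "replicate n (unit_vec 0) \<in> walk_paths d n"
    using assms by (auto simp: walk_paths_def steps_def)
  then show ?thesis
    by blast
qed

lemma restricted_step_mass:
  "(\<Sum>s\<in>steps d. if x + s \<in> A then 1 / real (inner_degree d A x) else 0) \<le> 1"
proof -
  have "(\<Sum>s\<in>steps d. if x + s \<in> A then 1 / real (inner_degree d A x) else 0)
      = real (inner_degree d A x) * (1 / real (inner_degree d A x))"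
    by (simp add: sum.inter_filter[OF finite_steps, symmetric] inner_degree_def)
  also have "\<dots> \<le> 1"
    by (cases "inner_degree d A x = 0") auto
  finally show ?thesis .
qed

lemma restricted_walk_mass:
  "(\<Sum>xs\<in>walk_paths d n. if path_range x xs \<subseteq> A then 1 / choices d A x xs else 0) \<le> 1"
proof (induction n arbitrary: x)
  case 0
  show ?case
    unfolding walk_paths_0 by simp
next
  case (Suc n)
  let ?w = "\<lambda>x xs. if path_range x xs \<subseteq> A then 1 / choices d A x xs else 0"
  let ?p = "\<lambda>s. if x + s \<in> A then 1 / real (inner_degree d A x) else 0"
  have inj: "inj_on (\<lambda>(s, ys). s # ys) (steps d \<times> walk_paths d n)"
    by (auto simp: inj_on_def)
  have first_step: "(\<Sum>ys\<in>walk_paths d n. ?w x (s # ys)) \<le> ?p s" for s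
  proof (cases "x \<in> A \<and> x + s \<in> A")
    case True
    then have "(\<Sum>ys\<in>walk_paths d n. ?w x (s # ys))
        = (\<Sum>ys\<in>walk_paths d n. 1 / real (inner_degree d A x) * ?w (x + s) ys)"
      by (intro sum.cong) auto
    also have "\<dots> = 1 / real (inner_degree d A x) * (\<Sum>ys\<in>walk_paths d n. ?w (x + s) ys)"
      by (rule sum_distrib_left[symmetric])
    also have "\<dots> \<le> 1 / real (inner_degree d A x) * 1"
      by (rule mult_left_mono[OF Suc]) simp
    finally show ?thesis using True by simp
  next
    case False
    then have "?w x (s # ys) = 0" for ys
      using start_in_path_range[of "x + s" ys] by auto
    then show ?thesis
      by simp
  qed
  have "(\<Sum>xs\<in>walk_paths d (Suc n). ?w x xs) = (\<Sum>s\<in>steps d. \<Sum>ys\<in>walk_paths d n. ?w x (s # ys))"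
    unfolding walk_paths_Suc sum.reindex[OF inj]
    by (simp add: sum.cartesian_product case_prod_unfold)
  also have "\<dots> \<le> (\<Sum>s\<in>steps d. ?p s)"
    by (rule sum_mono[OF first_step])
  also have "\<dots> \<le> 1"
    by (rule restricted_step_mass)
  finally show ?case .
qed

text \<open>One step of the weight bound: leaving x costs a factor inner_degree x, which is
  at most m, and at most m (1 - 1/m) when x is a point of B not counted yet in R.\<close>
lemma inner_degree_step_le:
  fixes d :: nat and B R :: "point set"
  defines "m \<equiv> real (card (steps d))"
  assumes B: "\<And>b. b \<in> B \<Longrightarrow> inner_degree d A b + 1 \<le> card (steps d)"
    and fin: "finite R"
  shows "real (inner_degree d A x) * (1 - 1 / m) ^ (card (B \<inter> R) - 1)
           \<le> m * (1 - 1 / m) ^ (card (B \<inter> insert x R) - 1)"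
proof (cases "x \<in> B")
  case True
  let ?q = "1 - 1 / m"
  let ?k = "card (B \<inter> R) - 1"
  let ?k' = "card (B \<inter> insert x R) - 1"
  have q: "?q \<ge> 0" "?q \<le> 1"
    using one_minus_inverse_nat_bounds[of "card (steps d)"] by (auto simp: m_def)
  have "real (inner_degree d A x) + 1 \<le> m"
    using B[OF True] unfolding m_def by linarith
  then have deg: "real (inner_degree d A x) \<le> m * ?q"
    by (simp add: right_diff_distrib)
  have "B \<inter> insert x R = insert x (B \<inter> R)"
    using True by auto
  then have "?k' \<le> ?k + 1"
    using fin by (simp add: card_insert_if, linarith)
  then have pow: "?q ^ (?k + 1) \<le> ?q ^ ?k'"
    by (rule power_decreasing) (use q in auto)
  have "real (inner_degree d A x) * ?q ^ ?k \<le> m * ?q * ?q ^ ?k"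
    using deg q by (intro mult_right_mono) auto
  also have "\<dots> = m * ?q ^ (?k + 1)"
    by simp
  also have "\<dots> \<le> m * ?q ^ ?k'"
    using pow by (intro mult_left_mono) (auto simp: m_def)
  finally show ?thesis .
next
  case False
  then show ?thesis
    using inner_degree_le[of d A x] one_minus_inverse_nat_bounds[of "card (steps d)"]
    by (simp add: m_def mult_right_mono)
qed

text \<open>Each point of B visited before the end of the path, where at most m - 1 of
  the m steps stay in A, saves a factor 1 - 1/m in the weight of the path.\<close>
lemma choices_le:
  fixes d :: nat and B :: "point set"
  defines "m \<equiv> real (card (steps d))"
  assumes B: "\<And>b. b \<in> B \<Longrightarrow> inner_degree d A b + 1 \<le> card (steps d)"
  shows "choices d A x xs \<le> m ^ length xs * (1 - 1 / m) ^ (card (B \<inter> path_range x xs) - 1)"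
proof (induction xs arbitrary: x)
  case Nil
  have "card (B \<inter> {x}) - 1 = 0"
    by (cases "x \<in> B") auto
  then show ?case
    by simp
next
  case (Cons s ys)
  let ?q = "1 - 1 / m"
  let ?R = "path_range (x + s) ys"
  have "choices d A x (s # ys) \<le> real (inner_degree d A x) * (m ^ length ys * ?q ^ (card (B \<inter> ?R) - 1))"
    using mult_left_mono[OF Cons] by simp
  also have "\<dots> = m ^ length ys * (real (inner_degree d A x) * ?q ^ (card (B \<inter> ?R) - 1))"
    by (simp add: ac_simps)
  also have "\<dots> \<le> m ^ length ys * (m * ?q ^ (card (B \<inter> insert x ?R) - 1))"
    using inner_degree_step_le[of B d A ?R x] B finite_path_range
    by (intro mult_left_mono) (simp_all add: m_def)
  finally show ?case
    by (simp add: ac_simps)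
qed

section \<open>Probability that the range equals a given set\<close>

text \<open>Paths with range A have weight at most M = m^n (1 - 1/m)^(|dA| - 1), while their
  reciprocal weights sum to at most 1; hence there are at most M of them.\<close>
lemma card_paths_with_range:
  fixes d n :: nat
  defines "m \<equiv> real (card (steps d))"
  shows "real (card {xs \<in> walk_paths d n. path_range 0 xs = A})
           \<le> m ^ n * (1 - 1 / m) ^ (card (inner_boundary d A) - 1)"
proof -
  let ?S = "{xs \<in> walk_paths d n. path_range 0 xs = A}"
  let ?M = "m ^ n * (1 - 1 / m) ^ (card (inner_boundary d A) - 1)"
  have M: "?M \<ge> 0"
    using one_minus_inverse_nat_bounds[of "card (steps d)"] by (simp add: m_def)
  have bounded: "choices d A 0 xs \<le> ?M" and positive: "choices d A 0 xs > 0"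
    if "xs \<in> ?S" for xs
  proof -
    have "inner_boundary d A \<inter> path_range 0 xs = inner_boundary d A"
      using that by (auto simp: inner_boundary_def)
    moreover have "length xs = n"
      using that by (simp add: walk_paths_def)
    ultimately show "choices d A 0 xs \<le> ?M"
      using choices_le[of "inner_boundary d A" d A 0 xs] inner_degree_boundary
      by (simp add: m_def)
    show "choices d A 0 xs > 0"
      using that by (intro choices_pos) (auto simp: walk_paths_def)
  qed
  have "choices d A 0 xs * (1 / choices d A 0 xs) = 1" if "xs \<in> ?S" for xs
    using positive[OF that] by simp
  then have "real (card ?S) = (\<Sum>xs\<in>?S. choices d A 0 xs * (1 / choices d A 0 xs))"
    by simp
  also have "\<dots> \<le> (\<Sum>xs\<in>?S. ?M * (1 / choices d A 0 xs))"
    by (intro sum_mono mult_right_mono bounded divide_nonneg_nonneg choices_nonneg) simp_all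
  also have "\<dots> = ?M * (\<Sum>xs\<in>?S. 1 / choices d A 0 xs)"
    by (rule sum_distrib_left[symmetric])
  also have "\<dots> = ?M * (\<Sum>xs\<in>walk_paths d n.
                     if path_range 0 xs = A then 1 / choices d A 0 xs else 0)"
    by (simp only: sum.inter_filter[OF finite_walk_paths])
  also have "\<dots> \<le> ?M * (\<Sum>xs\<in>walk_paths d n.
                     if path_range 0 xs \<subseteq> A then 1 / choices d A 0 xs else 0)"
    by (intro mult_left_mono sum_mono M) (auto simp: choices_nonneg)
  also have "\<dots> \<le> ?M"
    using mult_left_mono[OF restricted_walk_mass M] by simp
  finally show ?thesis .
qed

text \<open>P(R(n) = A) <= (1 - 1/(2d))^(|dA| - 1), written with a real exponent so that
  it also covers an empty boundary.\<close>
lemma pmf_walk_range_le: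
  assumes "d \<ge> 1"
  shows "pmf (map_pmf walk_range (walk d n)) A
           \<le> (1 - 1 / (2 * real d)) powr (real (card (inner_boundary d A)) - 1)"
proof -
  define m where "m = real (card (steps d))"
  define k where "k = card (inner_boundary d A) - 1"
  let ?W = "walk_paths d n"
  let ?r = "1 - 1 / (2 * real d)"
  have "card (steps d) > 0"
    using steps_nonempty[OF assms] finite_steps by (simp add: card_gt_0_iff)
  then have m: "0 < m" "m \<le> 2 * real d"
    using card_steps_le[of d] by (simp_all add: m_def)
  have r: "0 < ?r"
    using assms by (simp add: field_simps)
  have "pmf (map_pmf walk_range (walk d n)) A = real (card (?W \<inter> walk_range -` {A})) / m ^ n"
    using walk_paths_nonempty[OF assms] finite_walk_paths
    by (simp add: walk_def pmf_map measure_pmf_of_set card_walk_paths m_def)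
  also have "?W \<inter> walk_range -` {A} = {xs \<in> ?W. path_range 0 xs = A}"
    by (auto simp: walk_range_eq_path_range)
  also have "real (card \<dots>) / m ^ n \<le> (1 - 1 / m) ^ k"
    using card_paths_with_range[of d n A] m
    by (simp add: pos_divide_le_eq mult.commute m_def k_def)
  also have "\<dots> \<le> ?r ^ k"
  proof (rule power_mono)
    show "1 - 1 / m \<le> ?r"
      using m by (simp add: frac_le)
    show "0 \<le> 1 - 1 / m"
      using one_minus_inverse_nat_bounds[of "card (steps d)"] by (simp add: m_def)
  qed
  finally have bound: "pmf (map_pmf walk_range (walk d n)) A \<le> ?r ^ k" .
  show ?thesis
  proof (cases "card (inner_boundary d A) = 0")
    case True
    have "pmf (map_pmf walk_range (walk d n)) A \<le> 1"
      by (rule pmf_le_1)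
    also have "1 \<le> ?r powr (-1)"
      using r by (simp add: powr_minus_divide le_divide_eq_1)
    finally show ?thesis
      using True by simp
  next
    case False
    then have "real (card (inner_boundary d A)) - 1 = real k"
      by (simp add: k_def of_nat_diff)
    then show ?thesis
      using bound r by (simp add: powr_realpow)
  qed
qed

section \<open>Entropy from a pointwise probability bound\<close>

lemma entropy2_ge_of_pmf_le:
  fixes p :: "'a pmf" and g :: "'a \<Rightarrow> real"
  assumes fin: "finite (set_pmf p)" and r: "0 < r"
    and bound: "\<And>x. x \<in> set_pmf p \<Longrightarrow> pmf p x \<le> r powr g x"
  shows "- log 2 r * measure_pmf.expectation p g \<le> entropy2 p"
proof -
  have summand: "- log 2 r * (g x * pmf p x) \<le> - pmf p x * log 2 (pmf p x)"
    if x: "x \<in> set_pmf p" for x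
  proof -
    have pos: "pmf p x > 0"
      using x by (simp add: pmf_positive)
    have "log 2 (pmf p x) \<le> log 2 (r powr g x)"
      using bound[OF x] pos by (intro log_mono) auto
    also have "\<dots> = g x * log 2 r"
      by (rule log_powr)
    finally show ?thesis
      using mult_left_mono[of _ _ "pmf p x"] pos by (simp add: algebra_simps)
  qed
  have "- log 2 r * measure_pmf.expectation p g = (\<Sum>x\<in>set_pmf p. - log 2 r * (g x * pmf p x))"
    by (simp add: integral_measure_pmf_real[OF fin] sum_distrib_left)
  also have "\<dots> \<le> entropy2 p"
    unfolding entropy2_def by (rule sum_mono[OF summand])
  finally show ?thesis .
qed

theorem mainTheorem3:
  fixes d n :: nat
  assumes "d \<ge> 1"
  shows "entropy2 (map_pmf walk_range (walk d n)) \<ge>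
         - log 2 (1 - 1 / (2 * real d)) *
           measure_pmf.expectation (walk d n)
             (\<lambda>xs. real (card (inner_boundary d (walk_range xs))) - 1)"
proof -
  let ?R = "map_pmf walk_range (walk d n)"
  let ?g = "\<lambda>A. real (card (inner_boundary d A)) - 1"
  have "finite (set_pmf (walk d n))"
    using walk_paths_nonempty[OF assms] finite_walk_paths by (simp add: walk_def)
  then have "finite (set_pmf ?R)"
    by simp
  moreover have "0 < 1 - 1 / (2 * real d)"
    using assms by (simp add: field_simps)
  ultimately have "- log 2 (1 - 1 / (2 * real d)) * measure_pmf.expectation ?R ?g \<le> entropy2 ?R"
    using pmf_walk_range_le[OF assms] by (rule entropy2_ge_of_pmf_le)
  then show ?thesis
    by simp
qed

end
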